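(* Let $H$ be an Abelian group, $X$ a simplicial set, $\gamma:X_2\to H$ a normalized 2-cocycle and $\eta$ its associated twisting function. Let $\mathrm{No}(X,H,\gamma)$ be the set of normalized 1-cochains $\alpha:X_1\to H$ with $\partial\alpha=\gamma$. Then for every $\alpha\in\mathrm{No}(X,H,\gamma)$ there is a unique section $\varphi_\alpha$ of $\pi_\eta:N(H)\times_\eta X\to X$ given in degrees $0,1,2$ by $x\mapsto(0,x)$, $x\mapsto(\alpha(x),x)$, $x\mapsto((\alpha(d_2x),\alpha(d_1x)-\alpha(d_2x)),x)$, and the map $\mathrm{No}(X,H,\gamma)\to\mathrm{Sec}(\pi_\eta)$, $\alpha\mapsto\varphi_\alpha$, is a bijection.
   Context: $N(H)$ is the nerve of $H$: $N(H)_n=H^n$, $d_0$ drops the first entry, $d_n$ drops the last, $d_i$ for $0<i<n$ replaces $a_i,a_{i+1}$ by $a_i+a_{i+1}$, $s_j$ inserts $0$ after the $j$-th entry. A normalized $k$-cochain is a function $X_k\to H$ vanishing on degenerate simplices; $\partial\alpha(x)=\alpha(d_0x)-\alpha(d_1x)+\alpha(d_2x)$; a normalized 2-cocycle is a normalized 2-cochain $\gamma$ with $\sum_{i=0}^3(-1)^i\gamma(d_i\sigma)=0$ for $\sigma\in X_3$. The associated twisting function: $\eta_1=0$, $\eta_2=\gamma$, $\eta_n(x)=(\gamma(d_3\cdots d_nx),\eta_{n-1}(d_1x)-\eta_{n-1}(d_0x))\in H^{n-1}$. $N(H)\times_\eta X$ has $n$-simplices $H^n\times X_n$, $d_0(g,x)=(d_0g+\eta_n(x),d_0x)$,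 other faces and degeneracies componentwise; $\pi_\eta$ is the projection; $\mathrm{Sec}(\pi_\eta)$ is the set of simplicial maps $s:X\to N(H)\times_\eta X$ with $\pi_\eta s=\mathrm{id}$. *)

theory Defs
  imports Main
begin

text \<open>A simplicial set is given by carriers X n (the n-simplices), face maps
  d n i : X n -> X (n-1) (for n >= 1, i <= n; the first argument is the degree of the
  source) and degeneracies s n j : X n -> X (n+1) (for j <= n), subject to the
  simplicial identities.\<close>

definition simplicial_set ::
  "(nat \<Rightarrow> 'x set) \<Rightarrow> (nat \<Rightarrow> nat \<Rightarrow> 'x \<Rightarrow> 'x) \<Rightarrow> (nat \<Rightarrow> nat \<Rightarrow> 'x \<Rightarrow> 'x) \<Rightarrow> bool" where
  "simplicial_set X d s \<longleftrightarrow>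
     (\<forall>n i x. i \<le> Suc n \<longrightarrow> x \<in> X (Suc n) \<longrightarrow> d (Suc n) i x \<in> X n) \<and>
     (\<forall>n j x. j \<le> n \<longrightarrow> x \<in> X n \<longrightarrow> s n j x \<in> X (Suc n)) \<and>
     \<comment> \<open>d_i d_j = d_{j-1} d_i for i < j\<close>
     (\<forall>n i j x. i < j \<longrightarrow> j \<le> Suc (Suc n) \<longrightarrow> x \<in> X (Suc (Suc n)) \<longrightarrow>
        d (Suc n) i (d (Suc (Suc n)) j x) = d (Suc n) (j - 1) (d (Suc (Suc n)) i x)) \<and>
     \<comment> \<open>d_i s_j = s_{j-1} d_i for i < j\<close>
     (\<forall>n i j x. i < j \<longrightarrow> j \<le> Suc n \<longrightarrow> x \<in> X (Suc n) \<longrightarrow>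
        d (Suc (Suc n)) i (s (Suc n) j x) = s n (j - 1) (d (Suc n) i x)) \<and>
     \<comment> \<open>d_j s_j = id = d_{j+1} s_j\<close>
     (\<forall>n j x. j \<le> n \<longrightarrow> x \<in> X n \<longrightarrow>
        d (Suc n) j (s n j x) = x \<and> d (Suc n) (Suc j) (s n j x) = x) \<and>
     \<comment> \<open>d_i s_j = s_j d_{i-1} for i > j+1\<close>
     (\<forall>n i j x. Suc j < i \<longrightarrow> i \<le> Suc (Suc n) \<longrightarrow> x \<in> X (Suc n) \<longrightarrow>
        d (Suc (Suc n)) i (s (Suc n) j x) = s n j (d (Suc n) (i - 1) x)) \<and>
     \<comment> \<open>s_i s_j = s_{j+1} s_i for i <= j\<close>
     (\<forall>n i j x. i \<le> j \<longrightarrow> j \<le> n \<longrightarrow> x \<in> X n \<longrightarrow>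
        s (Suc n) i (s n j x) = s (Suc n) (Suc j) (s n i x))"

definition normalized_1_cochain ::
  "(nat \<Rightarrow> 'x set) \<Rightarrow> (nat \<Rightarrow> nat \<Rightarrow> 'x \<Rightarrow> 'x) \<Rightarrow> ('x \<Rightarrow> 'h::ab_group_add) \<Rightarrow> bool" where
  "normalized_1_cochain X s \<alpha> \<longleftrightarrow>
     (\<forall>y\<in>X 0. \<alpha> (s 0 0 y) = 0) \<and> (\<forall>x. x \<notin> X 1 \<longrightarrow> \<alpha> x = undefined)"

definition coboundary1 ::
  "(nat \<Rightarrow> nat \<Rightarrow> 'x \<Rightarrow> 'x) \<Rightarrow> ('x \<Rightarrow> 'h::ab_group_add) \<Rightarrow> 'x \<Rightarrow> 'h" where
  "coboundary1 d \<alpha> x = \<alpha> (d 2 0 x) - \<alpha> (d 2 1 x) + \<alpha> (d 2 2 x)"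

definition normalized_2_cocycle ::
  "(nat \<Rightarrow> 'x set) \<Rightarrow> (nat \<Rightarrow> nat \<Rightarrow> 'x \<Rightarrow> 'x) \<Rightarrow> (nat \<Rightarrow> nat \<Rightarrow> 'x \<Rightarrow> 'x)
     \<Rightarrow> ('x \<Rightarrow> 'h::ab_group_add) \<Rightarrow> bool" where
  "normalized_2_cocycle X d s \<gamma> \<longleftrightarrow>
     (\<forall>y\<in>X 1. \<gamma> (s 1 0 y) = 0 \<and> \<gamma> (s 1 1 y) = 0) \<and>
     (\<forall>\<sigma>\<in>X 3. \<gamma> (d 3 0 \<sigma>) - \<gamma> (d 3 1 \<sigma>) + \<gamma> (d 3 2 \<sigma>) - \<gamma> (d 3 3 \<sigma>) = 0)"

definition No ::
  "(nat \<Rightarrow> 'x set) \<Rightarrow> (nat \<Rightarrow> nat \<Rightarrow> 'x \<Rightarrow> 'x) \<Rightarrow> (nat \<Rightarrow> nat \<Rightarrow> 'x \<Rightarrow> 'x)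
     \<Rightarrow> ('x \<Rightarrow> 'h::ab_group_add) \<Rightarrow> ('x \<Rightarrow> 'h) set" where
  "No X d s \<gamma> = {\<alpha>. normalized_1_cochain X s \<alpha> \<and> (\<forall>x\<in>X 2. coboundary1 d \<alpha> x = \<gamma> x)}"

text \<open>The nerve N(H): n-simplices are lists of length n.\<close>

definition nerve_face :: "nat \<Rightarrow> nat \<Rightarrow> 'h::ab_group_add list \<Rightarrow> 'h list" where
  "nerve_face n i g =
     (if i = 0 then tl g
      else if i = n then butlast g
      else take (i - 1) g @ [g ! (i - 1) + g ! i] @ drop (Suc i) g)"

definition nerve_degen :: "nat \<Rightarrow> 'h::ab_group_add list \<Rightarrow> 'h list" where
  "nerve_degen j g = take j g @ [0] @ drop j g"

fun down_to_2 :: "(nat \<Rightarrow> nat \<Rightarrow> 'x \<Rightarrow> 'x) \<Rightarrow> nat \<Rightarrow> 'x \<Rightarrow> 'x" where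
  "down_to_2 d (Suc (Suc (Suc k))) x = down_to_2 d (Suc (Suc k)) (d (Suc (Suc (Suc k))) (Suc (Suc (Suc k))) x)"
| "down_to_2 d _ x = x"

text \<open>The twisting function: eta n x is a list of length n-1 (n >= 1).\<close>

fun eta :: "(nat \<Rightarrow> nat \<Rightarrow> 'x \<Rightarrow> 'x) \<Rightarrow> ('x \<Rightarrow> 'h::ab_group_add) \<Rightarrow> nat \<Rightarrow> 'x \<Rightarrow> 'h list" where
  "eta d \<gamma> 0 x = []"
| "eta d \<gamma> (Suc 0) x = []"
| "eta d \<gamma> (Suc (Suc 0)) x = [\<gamma> x]"
| "eta d \<gamma> (Suc (Suc (Suc k))) x =
     \<gamma> (down_to_2 d (Suc (Suc (Suc k))) x) #
     map2 (-) (eta d \<gamma> (Suc (Suc k)) (d (Suc (Suc (Suc k))) 1 x))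
              (eta d \<gamma> (Suc (Suc k)) (d (Suc (Suc (Suc k))) 0 x))"

definition tw_simplices :: "(nat \<Rightarrow> 'x set) \<Rightarrow> nat \<Rightarrow> ('h list \<times> 'x) set" where
  "tw_simplices X n = {(g, x). length g = n \<and> x \<in> X n}"

definition tw_face ::
  "(nat \<Rightarrow> nat \<Rightarrow> 'x \<Rightarrow> 'x) \<Rightarrow> ('x \<Rightarrow> 'h::ab_group_add) \<Rightarrow> nat \<Rightarrow> nat
     \<Rightarrow> 'h list \<times> 'x \<Rightarrow> 'h list \<times> 'x" where
  "tw_face d \<gamma> n i gx =
     (case gx of (g, x) \<Rightarrow>
        if i = 0 then (map2 (+) (nerve_face n 0 g) (eta d \<gamma> n x), d n 0 x)
        else (nerve_face n i g, d n i x))"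

definition tw_degen ::
  "(nat \<Rightarrow> nat \<Rightarrow> 'x \<Rightarrow> 'x) \<Rightarrow> nat \<Rightarrow> nat \<Rightarrow> 'h::ab_group_add list \<times> 'x \<Rightarrow> 'h list \<times> 'x" where
  "tw_degen s n j gx = (case gx of (g, x) \<Rightarrow> (nerve_degen j g, s n j x))"

definition Sec ::
  "(nat \<Rightarrow> 'x set) \<Rightarrow> (nat \<Rightarrow> nat \<Rightarrow> 'x \<Rightarrow> 'x) \<Rightarrow> (nat \<Rightarrow> nat \<Rightarrow> 'x \<Rightarrow> 'x)
     \<Rightarrow> ('x \<Rightarrow> 'h::ab_group_add) \<Rightarrow> (nat \<Rightarrow> 'x \<Rightarrow> 'h list \<times> 'x) set" where
  "Sec X d s \<gamma> = {\<phi>.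
     (\<forall>n x. x \<notin> X n \<longrightarrow> \<phi> n x = undefined) \<and>
     (\<forall>n. \<forall>x\<in>X n. \<phi> n x \<in> tw_simplices X n) \<and>
     (\<forall>n i. \<forall>x\<in>X (Suc n). i \<le> Suc n \<longrightarrow> \<phi> n (d (Suc n) i x) = tw_face d \<gamma> (Suc n) i (\<phi> (Suc n) x)) \<and>
     (\<forall>n j. \<forall>x\<in>X n. j \<le> n \<longrightarrow> \<phi> (Suc n) (s n j x) = tw_degen s n j (\<phi> n x)) \<and>
     (\<forall>n. \<forall>x\<in>X n. snd (\<phi> n x) = x)}"

definition low_values ::
  "(nat \<Rightarrow> 'x set) \<Rightarrow> (nat \<Rightarrow> nat \<Rightarrow> 'x \<Rightarrow> 'x) \<Rightarrow> ('x \<Rightarrow> 'h::ab_group_add)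
     \<Rightarrow> (nat \<Rightarrow> 'x \<Rightarrow> 'h list \<times> 'x) \<Rightarrow> bool" where
  "low_values X d \<alpha> \<phi> \<longleftrightarrow>
     (\<forall>x\<in>X 0. \<phi> 0 x = ([], x)) \<and>
     (\<forall>x\<in>X 1. \<phi> 1 x = ([\<alpha> x], x)) \<and>
     (\<forall>x\<in>X 2. \<phi> 2 x = ([\<alpha> (d 2 2 x), \<alpha> (d 2 1 x) - \<alpha> (d 2 2 x)], x))"

end

theory Submission
  imports Defs
begin

text \<open>Write an n-simplex of the nerve N(H) as the list of successive differences of a sequence
  h 0, ..., h n in H; its faces d i with i > 0 and its degeneracies then delete or repeat one h k.
  Writing x[v0, ..., vp] for the face of x on the vertices v0 < ... < vp, the section attached
  to \<alpha> sends x to the differences of h k = \<alpha>(x[0, k]) (with h 0 = 0), so faces d i with i > 0 and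
  all degeneracies are respected for free. For d 0 one needs
  \<alpha>(x[1, k+1]) = \<alpha>(x[0, k+1]) - \<alpha>(x[0, 1]) + \<gamma>(x[0, 1, k+1]), which is \<partial>\<alpha> = \<gamma>, together with
  the closed form (\<eta> n x) ! k = \<gamma>(x[0, 1, k+2]) - \<gamma>(x[0, 1, k+1]) of the twisting function,
  obtained from the cocycle condition on x[0, 1, 2, k+2] by induction on n.
  Conversely, an element of H^n with n \<ge> 2 is determined by its last two faces, so a section is
  determined by its degree-1 part; reading that part off is the inverse map, and the face relations
  in degree 2 say precisely that it is a normalized cochain with \<partial>\<alpha> = \<gamma>.\<close>

lemma bij_betw_THE:
  assumes ex1: "\<And>a. a \<in> A \<Longrightarrow> \<exists>!b. b \<in> B \<and> R a b"
    and surj: "\<And>b. b \<in> B \<Longrightarrow> \<exists>a\<in>A. R a b"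
    and inj: "\<And>a a' b. a \<in> A \<Longrightarrow> a' \<in> A \<Longrightarrow> b \<in> B \<Longrightarrow> R a b \<Longrightarrow> R a' b \<Longrightarrow> a = a'"
  shows "bij_betw (\<lambda>a. THE b. b \<in> B \<and> R a b) A B"
proof (rule bij_betwI')
  fix a a' assume a: "a \<in> A" and a': "a' \<in> A"
  show "((THE b. b \<in> B \<and> R a b) = (THE b. b \<in> B \<and> R a' b)) = (a = a')"
  proof
    assume "(THE b. b \<in> B \<and> R a b) = (THE b. b \<in> B \<and> R a' b)"
    with theI'[OF ex1[OF a]] theI'[OF ex1[OF a']] show "a = a'"
      using inj[OF a a'] by auto
  qed simp
next
  fix a assume "a \<in> A"
  from theI'[OF ex1[OF this]] show "(THE b. b \<in> B \<and> R a b) \<in> B" ..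
next
  fix b assume b: "b \<in> B"
  with surj obtain a where a: "a \<in> A" "R a b" by blast
  with b have "b = (THE b. b \<in> B \<and> R a b)"
    using the1_equality[OF ex1[OF \<open>a \<in> A\<close>]] by simp
  with a show "\<exists>a\<in>A. b = (THE b. b \<in> B \<and> R a b)" by blast
qed

section \<open>Nerve coordinates\<close>

definition diffs :: "(nat \<Rightarrow> 'h::ab_group_add) \<Rightarrow> nat \<Rightarrow> 'h list" where
  "diffs a n = map (\<lambda>k. a (Suc k) - a k) [0..<n]"

lemma length_diffs [simp]: "length (diffs a n) = n"
  by (simp add: diffs_def)

lemma nth_diffs [simp]: "k < n \<Longrightarrow> diffs a n ! k = a (Suc k) - a k"
  by (simp add: diffs_def)

lemma diffs_cong: "(\<And>k. k \<le> n \<Longrightarrow> a k = b k) \<Longrightarrow> diffs a n = diffs b n"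
  by (simp add: diffs_def)

lemma diffs_diff_const: "diffs (\<lambda>k. a k - c) n = diffs a n"
  by (simp add: diffs_def)

lemma diffs_Suc: "diffs a (Suc n) = (a 1 - a 0) # diffs (\<lambda>k. a (Suc k)) n"
  by (intro nth_equalityI) (auto simp: nth_Cons split: nat.split)

lemma map2_plus_diffs: "map2 (+) (diffs a n) (diffs b n) = diffs (\<lambda>k. a k + b k) n"
  by (intro nth_equalityI) (auto simp: algebra_simps)

lemma map2_minus_diffs: "map2 (-) (diffs a n) (diffs b n) = diffs (\<lambda>k. a k - b k) n"
  by (intro nth_equalityI) (auto simp: algebra_simps)

lemma nerve_face_diffs:
  assumes "i \<le> Suc n"
  shows "nerve_face (Suc n) i (diffs a (Suc n)) = diffs (\<lambda>k. a (if k < i then k else Suc k)) n"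
proof (intro nth_equalityI)
  show "length (nerve_face (Suc n) i (diffs a (Suc n))) = length (diffs (\<lambda>k. a (if k < i then k else Suc k)) n)"
    using assms by (auto simp: nerve_face_def)
next
  fix t assume "t < length (nerve_face (Suc n) i (diffs a (Suc n)))"
  then have "t < n" using assms by (auto simp: nerve_face_def split: if_splits)
  then show "nerve_face (Suc n) i (diffs a (Suc n)) ! t = diffs (\<lambda>k. a (if k < i then k else Suc k)) n ! t"
    using assms by (cases "Suc t = i") (auto simp: nerve_face_def nth_append nth_tl nth_butlast)
qed

lemma nerve_degen_diffs:
  assumes "j \<le> n"
  shows "nerve_degen j (diffs a n) = diffs (\<lambda>k. a (if k \<le> j then k else k - 1)) (Suc n)"
proof (intro nth_equalityI)
  fix t assume "t < length (nerve_degen j (diffs a n))"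
  then have "t < Suc n" using assms by (simp add: nerve_degen_def)
  then show "nerve_degen j (diffs a n) ! t = diffs (\<lambda>k. a (if k \<le> j then k else k - 1)) (Suc n) ! t"
    using assms by (auto simp: nerve_degen_def nth_append)
qed (use assms in \<open>simp add: nerve_degen_def\<close>)

lemma nerve_simplex_eq_by_last_faces:
  assumes len: "length g = Suc (Suc m)" "length g' = Suc (Suc m)"
    and last: "nerve_face (Suc (Suc m)) (Suc (Suc m)) g = nerve_face (Suc (Suc m)) (Suc (Suc m)) g'"
    and penultimate: "nerve_face (Suc (Suc m)) (Suc m) g = nerve_face (Suc (Suc m)) (Suc m) g'"
  shows "g = g'"
proof -
  have butlast: "butlast g = butlast g'"
    using last by (simp add: nerve_face_def)
  have merged: "nerve_face (Suc (Suc m)) (Suc m) h ! m = h ! m + h ! Suc m" if "length h = Suc (Suc m)"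
    for h :: "'a list"
    using that by (simp add: nerve_face_def nth_append)
  have "g ! m = g' ! m"
    using arg_cong[OF butlast, of "\<lambda>h. h ! m"] len by (simp add: nth_butlast)
  moreover have "g ! m + g ! Suc m = g' ! m + g' ! Suc m"
    using merged[of g] merged[of g'] len penultimate by simp
  moreover have "g \<noteq> []" "g' \<noteq> []"
    using len by auto
  ultimately have "last g = last g'"
    using len by (simp add: last_conv_nth)
  with \<open>g \<noteq> []\<close> \<open>g' \<noteq> []\<close> show ?thesis
    using butlast by (metis append_butlast_last_id)
qed

section \<open>Faces on an initial segment of vertices and one further vertex\<close>

text \<open>front_face d n m x = x[0, ..., m] for an n-simplex x, front_last_face d p k y = y[0, ..., p - 1, k]
  for a k-simplex y, and hence front_vertex_face d p n k x = x[0, ..., p - 1, k].\<close>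

fun front_face :: "(nat \<Rightarrow> nat \<Rightarrow> 'x \<Rightarrow> 'x) \<Rightarrow> nat \<Rightarrow> nat \<Rightarrow> 'x \<Rightarrow> 'x" where
  "front_face d 0 m x = x"
| "front_face d (Suc n) m x = (if Suc n \<le> m then x else front_face d n m (d (Suc n) (Suc n) x))"

fun front_last_face :: "(nat \<Rightarrow> nat \<Rightarrow> 'x \<Rightarrow> 'x) \<Rightarrow> nat \<Rightarrow> nat \<Rightarrow> 'x \<Rightarrow> 'x" where
  "front_last_face d p 0 y = y"
| "front_last_face d p (Suc k) y = (if Suc k \<le> p then y else front_last_face d p k (d (Suc k) p y))"

definition front_vertex_face :: "(nat \<Rightarrow> nat \<Rightarrow> 'x \<Rightarrow> 'x) \<Rightarrow> nat \<Rightarrow> nat \<Rightarrow> nat \<Rightarrow> 'x \<Rightarrow> 'x" where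
  "front_vertex_face d p n k x = front_last_face d p k (front_face d n k x)"

lemma front_face_self [simp]: "front_face d n n x = x"
  by (cases n) auto

lemma front_face_Suc [simp]: "m \<le> n \<Longrightarrow> front_face d (Suc n) m x = front_face d n m (d (Suc n) (Suc n) x)"
  by simp

lemma front_last_face_self [simp]: "front_last_face d p p y = y"
  by (cases p) auto

lemma front_last_face_Suc [simp]:
  "p \<le> k \<Longrightarrow> front_last_face d p (Suc k) y = front_last_face d p k (d (Suc k) p y)"
  by simp

declare front_face.simps(2) [simp del] front_last_face.simps(2) [simp del]

lemma down_to_2_eq_front_face: "down_to_2 d (Suc (Suc n)) x = front_face d (Suc (Suc n)) 2 x"
  by (induction n arbitrary: x) (simp_all add: numeral_2_eq_2)

locale simplicial =
  fixes X :: "nat \<Rightarrow> 'x set" and d :: "nat \<Rightarrow> nat \<Rightarrow> 'x \<Rightarrow> 'x" and s :: "nat \<Rightarrow> nat \<Rightarrow> 'x \<Rightarrow> 'x"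
  assumes face_closed: "i \<le> Suc n \<Longrightarrow> x \<in> X (Suc n) \<Longrightarrow> d (Suc n) i x \<in> X n"
    and degen_closed: "j \<le> n \<Longrightarrow> x \<in> X n \<Longrightarrow> s n j x \<in> X (Suc n)"
    and face_face: "i < j \<Longrightarrow> j \<le> Suc (Suc n) \<Longrightarrow> x \<in> X (Suc (Suc n)) \<Longrightarrow>
      d (Suc n) i (d (Suc (Suc n)) j x) = d (Suc n) (j - 1) (d (Suc (Suc n)) i x)"
    and face_degen_less: "i < j \<Longrightarrow> j \<le> Suc n \<Longrightarrow> x \<in> X (Suc n) \<Longrightarrow>
      d (Suc (Suc n)) i (s (Suc n) j x) = s n (j - 1) (d (Suc n) i x)"
    and face_degen_same: "j \<le> n \<Longrightarrow> x \<in> X n \<Longrightarrow> d (Suc n) j (s n j x) = x"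
    and face_degen_Suc: "j \<le> n \<Longrightarrow> x \<in> X n \<Longrightarrow> d (Suc n) (Suc j) (s n j x) = x"
    and face_degen_greater: "Suc j < i \<Longrightarrow> i \<le> Suc (Suc n) \<Longrightarrow> x \<in> X (Suc n) \<Longrightarrow>
      d (Suc (Suc n)) i (s (Suc n) j x) = s n j (d (Suc n) (i - 1) x)"

lemma simplicial_setD: "simplicial_set X d s \<Longrightarrow> simplicial X d s"
  unfolding simplicial_set_def by unfold_locales simp_all

context simplicial
begin

lemma front_face_closed: "m \<le> n \<Longrightarrow> x \<in> X n \<Longrightarrow> front_face d n m x \<in> X m"
  by (induction n arbitrary: x) (auto simp: face_closed le_Suc_eq)

lemma front_last_face_closed: "p \<le> k \<Longrightarrow> y \<in> X k \<Longrightarrow> front_last_face d p k y \<in> X p"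
  by (induction k arbitrary: y) (auto simp: face_closed le_Suc_eq)

lemma front_vertex_face_closed: "p \<le> k \<Longrightarrow> k \<le> n \<Longrightarrow> x \<in> X n \<Longrightarrow> front_vertex_face d p n k x \<in> X p"
  unfolding front_vertex_face_def by (intro front_last_face_closed front_face_closed) auto

lemma front_face_face_greater:
  "m < i \<Longrightarrow> i \<le> Suc n \<Longrightarrow> m \<le> n \<Longrightarrow> x \<in> X (Suc n) \<Longrightarrow>
    front_face d n m (d (Suc n) i x) = front_face d (Suc n) m x"
proof (induction n arbitrary: x i)
  case (Suc n)
  show ?case
  proof (cases "m = Suc n")
    case True
    with Suc.prems have "i = Suc (Suc n)" by simp
    with True show ?thesis by simp
  next
    case False
    with Suc.prems have m: "m \<le> n" by simp
    show ?thesis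
    proof (cases "i = Suc (Suc n)")
      case False
      with Suc.prems have i: "i \<le> Suc n" by simp
      let ?x' = "d (Suc (Suc n)) (Suc (Suc n)) x"
      have "front_face d (Suc n) m (d (Suc (Suc n)) i x) = front_face d n m (d (Suc n) i ?x')"
        using m i Suc.prems by (simp add: face_face)
      also have "\<dots> = front_face d (Suc n) m ?x'"
        using m i Suc.prems by (intro Suc.IH) (simp_all add: face_closed)
      finally show ?thesis using m by simp
    qed (use m in simp)
  qed
qed (auto simp: le_Suc_eq)

lemma front_face_face_le:
  "i \<le> m \<Longrightarrow> m \<le> n \<Longrightarrow> x \<in> X (Suc n) \<Longrightarrow>
    front_face d n m (d (Suc n) i x) = d (Suc m) i (front_face d (Suc n) (Suc m) x)"
proof (induction n arbitrary: x)
  case (Suc n)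
  show ?case
  proof (cases "m = Suc n")
    case False
    with Suc.prems have m: "m \<le> n" by simp
    let ?x' = "d (Suc (Suc n)) (Suc (Suc n)) x"
    have "front_face d (Suc n) m (d (Suc (Suc n)) i x) = front_face d n m (d (Suc n) i ?x')"
      using m Suc.prems by (simp add: face_face)
    also have "\<dots> = d (Suc m) i (front_face d (Suc n) (Suc m) ?x')"
      using m Suc.prems by (intro Suc.IH) (simp_all add: face_closed)
    finally show ?thesis using m by simp
  qed simp
qed simp

lemma front_face_front_face: "m \<le> k \<Longrightarrow> k \<le> n \<Longrightarrow> front_face d k m (front_face d n k x) = front_face d n m x"
  by (induction n arbitrary: x) (auto simp: le_Suc_eq)

lemma front_last_face_face_ge:
  "p \<le> i \<Longrightarrow> i \<le> k \<Longrightarrow> y \<in> X (Suc k) \<Longrightarrow>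
    front_last_face d p k (d (Suc k) i y) = front_last_face d p (Suc k) y"
proof (induction k arbitrary: y i)
  case (Suc k)
  show ?case
  proof (cases "i = p")
    case False
    with Suc.prems have p: "p < i" "p \<le> k" by auto
    let ?y' = "d (Suc (Suc k)) p y"
    have "front_last_face d p (Suc k) (d (Suc (Suc k)) i y) = front_last_face d p k (d (Suc k) (i - 1) ?y')"
      using p Suc.prems by (simp add: face_face)
    also have "\<dots> = front_last_face d p (Suc k) ?y'"
      using p Suc.prems by (intro Suc.IH) (simp_all add: face_closed)
    finally show ?thesis using p by simp
  qed (use Suc.prems in simp)
qed simp

lemma front_last_face_face_less:
  "i < p \<Longrightarrow> p \<le> k \<Longrightarrow> y \<in> X (Suc k) \<Longrightarrow>
    front_last_face d p k (d (Suc k) i y) = d (Suc p) i (front_last_face d (Suc p) (Suc k) y)"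
proof (induction k arbitrary: y)
  case (Suc k)
  show ?case
  proof (cases "p = Suc k")
    case False
    with Suc.prems have p: "p \<le> k" by simp
    let ?y' = "d (Suc (Suc k)) (Suc p) y"
    have "front_last_face d p (Suc k) (d (Suc (Suc k)) i y) = front_last_face d p k (d (Suc k) i ?y')"
      using p Suc.prems by (simp add: face_face)
    also have "\<dots> = d (Suc p) i (front_last_face d (Suc p) (Suc k) ?y')"
      using p Suc.prems by (intro Suc.IH) (simp_all add: face_closed)
    finally show ?thesis using p by simp
  qed simp
qed simp

lemma last_face_front_last_face:
  "Suc q \<le> k \<Longrightarrow> y \<in> X k \<Longrightarrow> d (Suc q) (Suc q) (front_last_face d (Suc q) k y) = front_face d k q y"
proof (induction k arbitrary: y)
  case (Suc k)
  show ?case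
  proof (cases "k = q")
    case False
    with Suc.prems have q: "Suc q \<le> k" by simp
    have "d (Suc q) (Suc q) (front_last_face d (Suc q) (Suc k) y) = front_face d k q (d (Suc k) (Suc q) y)"
      using q Suc.prems by (simp add: Suc.IH face_closed)
    also have "\<dots> = front_face d (Suc k) q y"
      using q Suc.prems by (intro front_face_face_greater) auto
    finally show ?thesis .
  qed simp
qed simp

lemma penultimate_face_front_last_face:
  "Suc q \<le> k \<Longrightarrow> y \<in> X k \<Longrightarrow> d (Suc q) q (front_last_face d (Suc q) k y) = front_last_face d q k y"
proof (induction k arbitrary: y)
  case (Suc k)
  show ?case
  proof (cases "k = q")
    case False
    with Suc.prems have q: "Suc q \<le> k" by simp
    have "d (Suc q) q (front_last_face d (Suc q) (Suc k) y) = front_last_face d q k (d (Suc k) (Suc q) y)"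
      using q Suc.prems by (simp add: Suc.IH face_closed)
    also have "\<dots> = front_last_face d q (Suc k) y"
      using q Suc.prems by (intro front_last_face_face_ge) auto
    finally show ?thesis .
  qed simp
qed simp

lemma front_vertex_face_face_greater:
  "k < i \<Longrightarrow> i \<le> Suc n \<Longrightarrow> k \<le> n \<Longrightarrow> x \<in> X (Suc n) \<Longrightarrow>
    front_vertex_face d p n k (d (Suc n) i x) = front_vertex_face d p (Suc n) k x"
  unfolding front_vertex_face_def by (simp only: front_face_face_greater)

lemma front_vertex_face_face_between:
  assumes "p \<le> i" "i \<le> k" "k \<le> n" "x \<in> X (Suc n)"
  shows "front_vertex_face d p n k (d (Suc n) i x) = front_vertex_face d p (Suc n) (Suc k) x"
proof -
  have "front_face d (Suc n) (Suc k) x \<in> X (Suc k)"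
    using assms by (intro front_face_closed) auto
  with assms show ?thesis
    unfolding front_vertex_face_def by (simp only: front_face_face_le front_last_face_face_ge)
qed

lemma front_vertex_face_face_less:
  assumes "i < p" "p \<le> k" "k \<le> n" "x \<in> X (Suc n)"
  shows "front_vertex_face d p n k (d (Suc n) i x) = d (Suc p) i (front_vertex_face d (Suc p) (Suc n) (Suc k) x)"
proof -
  have "front_face d (Suc n) (Suc k) x \<in> X (Suc k)"
    using assms by (intro front_face_closed) auto
  with assms show ?thesis
    unfolding front_vertex_face_def by (simp only: front_face_face_le front_last_face_face_less)
qed

lemma last_face_front_vertex_face:
  assumes "Suc q \<le> k" "k \<le> n" "x \<in> X n"
  shows "d (Suc q) (Suc q) (front_vertex_face d (Suc q) n k x) = front_vertex_face d q n q x"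
proof -
  have "front_face d n k x \<in> X k"
    using assms by (intro front_face_closed)
  with assms show ?thesis
    unfolding front_vertex_face_def
    by (simp only: last_face_front_last_face front_face_front_face front_last_face_self Suc_leD)
qed

lemma penultimate_face_front_vertex_face:
  assumes "Suc q \<le> k" "k \<le> n" "x \<in> X n"
  shows "d (Suc q) q (front_vertex_face d (Suc q) n k x) = front_vertex_face d q n k x"
proof -
  have "front_face d n k x \<in> X k"
    using assms by (intro front_face_closed)
  with assms show ?thesis
    unfolding front_vertex_face_def by (simp only: penultimate_face_front_last_face)
qed

lemma front_face_degen_ge:
  "m \<le> j \<Longrightarrow> j \<le> n \<Longrightarrow> x \<in> X n \<Longrightarrow> front_face d (Suc n) m (s n j x) = front_face d n m x"
proof (induction n arbitrary: x)
  case 0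
  then show ?case by (simp add: face_degen_Suc)
next
  case (Suc n)
  show ?case
  proof (cases "j = Suc n")
    case False
    with Suc.prems have j: "j \<le> n" by simp
    have "front_face d (Suc (Suc n)) m (s (Suc n) j x) = front_face d (Suc n) m (s n j (d (Suc n) (Suc n) x))"
      using j Suc.prems by (simp add: face_degen_greater)
    also have "\<dots> = front_face d n m (d (Suc n) (Suc n) x)"
      using j Suc.prems by (intro Suc.IH) (simp_all add: face_closed)
    finally show ?thesis using j Suc.prems by simp
  qed (use Suc.prems in \<open>simp add: face_degen_Suc\<close>)
qed

lemma front_face_degen_less:
  "j < m \<Longrightarrow> m \<le> Suc n \<Longrightarrow> x \<in> X n \<Longrightarrow>
    front_face d (Suc n) m (s n j x) = s (m - 1) j (front_face d n (m - 1) x)"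
proof (induction n arbitrary: x)
  case 0
  then have "m = 1" by simp
  then show ?case by simp
next
  case (Suc n)
  show ?case
  proof (cases "m = Suc (Suc n)")
    case False
    with Suc.prems have m: "m \<le> Suc n" by simp
    have "front_face d (Suc (Suc n)) m (s (Suc n) j x) = front_face d (Suc n) m (s n j (d (Suc n) (Suc n) x))"
      using m Suc.prems by (simp add: face_degen_greater)
    also have "\<dots> = s (m - 1) j (front_face d n (m - 1) (d (Suc n) (Suc n) x))"
      using m Suc.prems by (intro Suc.IH) (simp_all add: face_closed)
    also have "\<dots> = s (m - 1) j (front_face d (Suc n) (m - 1) x)"
      using m Suc.prems by simp
    finally show ?thesis .
  qed simp
qed

lemma front_last_face_degen:
  "p \<le> Suc j \<Longrightarrow> j \<le> k \<Longrightarrow> p \<le> k \<Longrightarrow> y \<in> X k \<Longrightarrow>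
    front_last_face d p (Suc k) (s k j y) = front_last_face d p k y"
proof (induction k arbitrary: y j)
  case 0
  then show ?case by (simp add: face_degen_same)
next
  case (Suc k)
  have "front_last_face d p (Suc (Suc k)) (s (Suc k) j y) = front_last_face d p (Suc k) (d (Suc (Suc k)) p (s (Suc k) j y))"
    using Suc.prems by simp
  also have "\<dots> = front_last_face d p (Suc k) y"
  proof (cases "p < j")
    case True
    then have "d (Suc (Suc k)) p (s (Suc k) j y) = s k (j - 1) (d (Suc k) p y)"
      using Suc.prems by (simp add: face_degen_less)
    moreover have "front_last_face d p (Suc k) (s k (j - 1) (d (Suc k) p y)) = front_last_face d p k (d (Suc k) p y)"
      using True Suc.prems by (intro Suc.IH) (simp_all add: face_closed)
    ultimately show ?thesis
      using True Suc.prems by simp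
  next
    case False
    with Suc.prems consider "j = p" | "Suc j = p" by linarith
    then have "d (Suc (Suc k)) p (s (Suc k) j y) = y"
      by cases (use Suc.prems in \<open>auto simp: face_degen_same face_degen_Suc\<close>)
    then show ?thesis by simp
  qed
  finally show ?case .
qed

lemma front_vertex_face_degen_ge:
  "k \<le> j \<Longrightarrow> j \<le> n \<Longrightarrow> x \<in> X n \<Longrightarrow> front_vertex_face d p (Suc n) k (s n j x) = front_vertex_face d p n k x"
  unfolding front_vertex_face_def by (simp only: front_face_degen_ge)

lemma front_vertex_face_degen_less:
  assumes "p \<le> Suc j" "j < k" "p < k" "k \<le> Suc n" "x \<in> X n"
  shows "front_vertex_face d p (Suc n) k (s n j x) = front_vertex_face d p n (k - 1) x"
proof -
  obtain k' where k: "k = Suc k'" using assms by (cases k) auto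
  have "front_face d n k' x \<in> X k'"
    using assms k by (intro front_face_closed) auto
  with assms k show ?thesis
    unfolding front_vertex_face_def
    by (simp add: front_face_degen_less front_last_face_degen del: front_last_face_Suc)
qed

end

section \<open>The section attached to a cochain\<close>

text \<open>edge_values d \<alpha> n x k = \<alpha>(x[0, k]) and triangle_values d \<gamma> n x k = \<gamma>(x[0, 1, k]) at the
  non-degenerate indices.\<close>

definition edge_values :: "(nat \<Rightarrow> nat \<Rightarrow> 'x \<Rightarrow> 'x) \<Rightarrow> ('x \<Rightarrow> 'h::ab_group_add) \<Rightarrow> nat \<Rightarrow> 'x \<Rightarrow> nat \<Rightarrow> 'h" where
  "edge_values d \<alpha> n x k = (if k = 0 then 0 else \<alpha> (front_vertex_face d 1 n k x))"

definition triangle_values :: "(nat \<Rightarrow> nat \<Rightarrow> 'x \<Rightarrow> 'x) \<Rightarrow> ('x \<Rightarrow> 'h::ab_group_add) \<Rightarrow> nat \<Rightarrow> 'x \<Rightarrow> nat \<Rightarrow> 'h" where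
  "triangle_values d \<gamma> n x k = (if k \<le> 1 then 0 else \<gamma> (front_vertex_face d 2 n k x))"

definition section_of_cochain ::
  "(nat \<Rightarrow> 'x set) \<Rightarrow> (nat \<Rightarrow> nat \<Rightarrow> 'x \<Rightarrow> 'x) \<Rightarrow> ('x \<Rightarrow> 'h::ab_group_add) \<Rightarrow> nat \<Rightarrow> 'x \<Rightarrow> 'h list \<times> 'x" where
  "section_of_cochain X d \<alpha> n x = (if x \<in> X n then (diffs (edge_values d \<alpha> n x) n, x) else undefined)"

lemma low_values_section_of_cochain: "low_values X d \<alpha> (section_of_cochain X d \<alpha>)"
  by (simp add: low_values_def section_of_cochain_def diffs_def edge_values_def front_vertex_face_def
      numeral_2_eq_2)

context simplicial
begin

lemma triangle_values_face_1_minus_face_0: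
  assumes \<gamma>: "normalized_2_cocycle X d s \<gamma>" and x: "x \<in> X (Suc n)" and k: "k < n"
  shows "triangle_values d \<gamma> n (d (Suc n) 1 x) (Suc k) - triangle_values d \<gamma> n (d (Suc n) 0 x) (Suc k)
    = triangle_values d \<gamma> (Suc n) x (Suc (Suc k)) - triangle_values d \<gamma> (Suc n) x 2"
proof (cases k)
  case (Suc j)
  define Q where "Q = front_vertex_face d 3 (Suc n) (Suc (Suc k)) x"
  have "Q \<in> X 3"
    unfolding Q_def using Suc k x by (intro front_vertex_face_closed) auto
  with \<gamma> have "\<gamma> (d 3 0 Q) - \<gamma> (d 3 1 Q) + \<gamma> (d 3 2 Q) - \<gamma> (d 3 3 Q) = 0"
    unfolding normalized_2_cocycle_def by blast
  moreover have "front_vertex_face d 2 n (Suc k) (d (Suc n) i x) = d 3 i Q" if "i < 2" for i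
    unfolding Q_def using that Suc k x by (simp add: front_vertex_face_face_less numeral_3_eq_3)
  moreover have "d 3 2 Q = front_vertex_face d 2 (Suc n) (Suc (Suc k)) x"
    unfolding Q_def using penultimate_face_front_vertex_face[of 2 "Suc (Suc k)" "Suc n" x] Suc k x
    by simp
  moreover have "d 3 3 Q = front_vertex_face d 2 (Suc n) 2 x"
    unfolding Q_def using last_face_front_vertex_face[of 2 "Suc (Suc k)" "Suc n" x] Suc k x
    by simp
  ultimately show ?thesis
    using Suc by (simp add: triangle_values_def algebra_simps)
qed (simp add: triangle_values_def numeral_2_eq_2)

lemma eta_eq_diffs:
  assumes \<gamma>: "normalized_2_cocycle X d s \<gamma>"
  shows "x \<in> X (Suc n) \<Longrightarrow> eta d \<gamma> (Suc n) x = diffs (\<lambda>k. triangle_values d \<gamma> (Suc n) x (Suc k)) n"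
proof (induction n arbitrary: x)
  case 0
  then show ?case by (simp add: diffs_def)
next
  case (Suc n)
  show ?case
  proof (cases n)
    case 0
    then show ?thesis by (simp add: diffs_def triangle_values_def front_vertex_face_def numeral_2_eq_2)
  next
    case (Suc m)
    let ?t = "triangle_values d \<gamma>"
    have "eta d \<gamma> (Suc (Suc n)) x = ?t (Suc (Suc n)) x 2 #
        map2 (-) (eta d \<gamma> (Suc n) (d (Suc (Suc n)) 1 x)) (eta d \<gamma> (Suc n) (d (Suc (Suc n)) 0 x))"
      using Suc by (simp add: down_to_2_eq_front_face triangle_values_def front_vertex_face_def)
    also have "map2 (-) (eta d \<gamma> (Suc n) (d (Suc (Suc n)) 1 x)) (eta d \<gamma> (Suc n) (d (Suc (Suc n)) 0 x))
        = diffs (\<lambda>k. ?t (Suc n) (d (Suc (Suc n)) 1 x) (Suc k) - ?t (Suc n) (d (Suc (Suc n)) 0 x) (Suc k)) n"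
      using Suc.prems by (simp add: Suc.IH face_closed map2_minus_diffs)
    also have "\<dots> = diffs (\<lambda>k. ?t (Suc (Suc n)) x (Suc (Suc k)) - ?t (Suc (Suc n)) x 2) n"
      using Suc.prems by (intro diffs_cong triangle_values_face_1_minus_face_0[OF \<gamma>]) auto
    also have "?t (Suc (Suc n)) x 2 # \<dots> = diffs (\<lambda>k. ?t (Suc (Suc n)) x (Suc k)) (Suc n)"
      by (simp add: diffs_diff_const diffs_Suc triangle_values_def numeral_2_eq_2)
    finally show ?thesis .
  qed
qed

lemma edge_values_face:
  assumes "1 \<le> i" "i \<le> Suc n" "k \<le> n" "x \<in> X (Suc n)"
  shows "edge_values d \<alpha> n (d (Suc n) i x) k = edge_values d \<alpha> (Suc n) x (if k < i then k else Suc k)"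
  using assms
  by (auto simp: edge_values_def front_vertex_face_face_greater front_vertex_face_face_between)

lemma edge_values_face_0:
  assumes \<alpha>: "\<forall>y\<in>X 2. coboundary1 d \<alpha> y = \<gamma> y" and k: "k \<le> n" and x: "x \<in> X (Suc n)"
  shows "edge_values d \<alpha> n (d (Suc n) 0 x) k
    = triangle_values d \<gamma> (Suc n) x (Suc k) + edge_values d \<alpha> (Suc n) x (Suc k) - edge_values d \<alpha> (Suc n) x 1"
proof (cases "k = 0")
  case False
  define T where "T = front_vertex_face d 2 (Suc n) (Suc k) x"
  have "T \<in> X 2"
    unfolding T_def using False k x by (intro front_vertex_face_closed) auto
  with \<alpha> have "\<alpha> (d 2 0 T) - \<alpha> (d 2 1 T) + \<alpha> (d 2 2 T) = \<gamma> T"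
    unfolding coboundary1_def by blast
  moreover have "front_vertex_face d 1 n k (d (Suc n) 0 x) = d 2 0 T"
    unfolding T_def using False k x by (simp add: front_vertex_face_face_less numeral_2_eq_2)
  moreover have "d 2 1 T = front_vertex_face d 1 (Suc n) (Suc k) x"
    unfolding T_def using penultimate_face_front_vertex_face[of 1 "Suc k" "Suc n" x] False k x
    by (simp add: numeral_2_eq_2)
  moreover have "d 2 2 T = front_vertex_face d 1 (Suc n) 1 x"
    unfolding T_def using last_face_front_vertex_face[of 1 "Suc k" "Suc n" x] False k x
    by (simp add: numeral_2_eq_2)
  ultimately show ?thesis
    using False by (simp add: edge_values_def triangle_values_def T_def algebra_simps)
qed (simp add: edge_values_def triangle_values_def)

lemma edge_values_degen:
  assumes \<alpha>: "\<forall>y\<in>X 0. \<alpha> (s 0 0 y) = 0" and "j \<le> n" "k \<le> Suc n" "x \<in> X n"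
  shows "edge_values d \<alpha> (Suc n) (s n j x) k = edge_values d \<alpha> n x (if k \<le> j then k else k - 1)"
proof -
  consider "k = 0" | "1 \<le> k" "k \<le> j" | "j < k" "2 \<le> k" | "k = 1" "j = 0"
    by linarith
  then show ?thesis
  proof cases
    case 4
    have "front_vertex_face d 1 (Suc n) 1 (s n 0 x) = s 0 0 (front_face d n 0 x)"
      using assms by (simp add: front_vertex_face_def front_face_degen_less)
    with 4 assms show ?thesis
      by (simp add: edge_values_def front_face_closed)
  qed (use assms in \<open>auto simp: edge_values_def front_vertex_face_degen_ge front_vertex_face_degen_less\<close>)
qed

lemma section_of_cochain_in_Sec:
  assumes \<gamma>: "normalized_2_cocycle X d s \<gamma>" and \<alpha>: "\<alpha> \<in> No X d s \<gamma>"
  shows "section_of_cochain X d \<alpha> \<in> Sec X d s \<gamma>"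
proof -
  have normalized: "\<forall>y\<in>X 0. \<alpha> (s 0 0 y) = 0" and cobound: "\<forall>y\<in>X 2. coboundary1 d \<alpha> y = \<gamma> y"
    using \<alpha> unfolding No_def normalized_1_cochain_def by auto
  let ?e = "edge_values d \<alpha>"
  have face_0: "diffs (?e n (d (Suc n) 0 x)) n
      = map2 (+) (nerve_face (Suc n) 0 (diffs (?e (Suc n) x) (Suc n))) (eta d \<gamma> (Suc n) x)"
    if x: "x \<in> X (Suc n)" for n x
  proof -
    have "diffs (?e n (d (Suc n) 0 x)) n
        = diffs (\<lambda>k. ?e (Suc n) x (Suc k) + triangle_values d \<gamma> (Suc n) x (Suc k) - ?e (Suc n) x 1) n"
      using x by (intro diffs_cong) (simp add: edge_values_face_0[OF cobound] algebra_simps)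
    then show ?thesis
      using x by (simp add: nerve_face_diffs eta_eq_diffs[OF \<gamma>] map2_plus_diffs diffs_diff_const)
  qed
  have face: "diffs (?e n (d (Suc n) i x)) n = nerve_face (Suc n) i (diffs (?e (Suc n) x) (Suc n))"
    if "1 \<le> i" "i \<le> Suc n" "x \<in> X (Suc n)" for n i x
    using that by (simp add: nerve_face_diffs edge_values_face cong: diffs_cong)
  have degen: "diffs (?e (Suc n) (s n j x)) (Suc n) = nerve_degen j (diffs (?e n x) n)"
    if "j \<le> n" "x \<in> X n" for n j x
    using that by (simp add: nerve_degen_diffs edge_values_degen[OF normalized] cong: diffs_cong)
  show ?thesis
    unfolding Sec_def
  proof (intro CollectI conjI allI ballI impI)
    fix n i x
    assume "x \<in> X (Suc n)" "i \<le> Suc n"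
    then show "section_of_cochain X d \<alpha> n (d (Suc n) i x) = tw_face d \<gamma> (Suc n) i (section_of_cochain X d \<alpha> (Suc n) x)"
      by (cases "i = 0") (simp_all add: section_of_cochain_def tw_face_def face_closed face_0 face)
  next
    fix n j x
    assume "x \<in> X n" "j \<le> n"
    then show "section_of_cochain X d \<alpha> (Suc n) (s n j x) = tw_degen s n j (section_of_cochain X d \<alpha> n x)"
      by (simp add: section_of_cochain_def tw_degen_def degen_closed degen)
  qed (simp_all add: section_of_cochain_def tw_simplices_def)
qed

end

section \<open>Sections are determined in degree 1\<close>

lemma Sec_simplex:
  assumes "\<phi> \<in> Sec X d s \<gamma>" "x \<in> X n"
  obtains g where "\<phi> n x = (g, x)" "length g = n"
proof -
  have "snd (\<phi> n x) = x" "\<phi> n x \<in> tw_simplices X n"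
    using assms unfolding Sec_def by auto
  then show ?thesis
    using that unfolding tw_simplices_def by (cases "\<phi> n x") auto
qed

lemma Sec_face:
  "\<phi> \<in> Sec X d s \<gamma> \<Longrightarrow> x \<in> X (Suc n) \<Longrightarrow> i \<le> Suc n \<Longrightarrow>
    \<phi> n (d (Suc n) i x) = tw_face d \<gamma> (Suc n) i (\<phi> (Suc n) x)"
  unfolding Sec_def by blast

lemma Sec_degen:
  "\<phi> \<in> Sec X d s \<gamma> \<Longrightarrow> x \<in> X n \<Longrightarrow> j \<le> n \<Longrightarrow> \<phi> (Suc n) (s n j x) = tw_degen s n j (\<phi> n x)"
  unfolding Sec_def by blast

lemma Sec_eqI:
  assumes \<phi>: "\<phi> \<in> Sec X d s \<gamma>" and \<psi>: "\<psi> \<in> Sec X d s \<gamma>" and agree: "\<forall>x\<in>X 1. \<phi> 1 x = \<psi> 1 x"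
  shows "\<phi> = \<psi>"
proof (intro ext)
  fix n x
  show "\<phi> n x = \<psi> n x"
  proof (induction n arbitrary: x rule: less_induct)
    case (less n)
    show ?case
    proof (cases "x \<in> X n")
      case False
      then show ?thesis using \<phi> \<psi> unfolding Sec_def by auto
    next
      case x: True
      obtain g g' where g: "\<phi> n x = (g, x)" "length g = n" and g': "\<psi> n x = (g', x)" "length g' = n"
        using Sec_simplex[OF \<phi> x] Sec_simplex[OF \<psi> x] by metis
      consider "n = 0" | "n = 1" | m where "n = Suc (Suc m)"
        by (cases n; cases "n - 1") auto
      then show ?thesis
      proof cases
        case 1
        with g g' show ?thesis by simp
      next
        case 2
        with agree x show ?thesis by simp
      next
        case 3
        have "nerve_face n i g = nerve_face n i g'" if "1 \<le> i" "i \<le> n" for i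
        proof -
          have "\<phi> (Suc m) (d n i x) = (nerve_face n i g, d n i x)"
            using Sec_face[OF \<phi>, of x "Suc m" i] that x g 3 by (simp add: tw_face_def)
          moreover have "\<psi> (Suc m) (d n i x) = (nerve_face n i g', d n i x)"
            using Sec_face[OF \<psi>, of x "Suc m" i] that x g' 3 by (simp add: tw_face_def)
          moreover have "\<phi> (Suc m) (d n i x) = \<psi> (Suc m) (d n i x)"
            using less.IH 3 by simp
          ultimately show ?thesis by simp
        qed
        with g g' 3 show ?thesis
          using nerve_simplex_eq_by_last_faces[of g m g'] by simp
      qed
    qed
  qed
qed

lemma Sec_eq_if_low_values:
  assumes "\<phi> \<in> Sec X d s \<gamma>" "\<psi> \<in> Sec X d s \<gamma>" "low_values X d \<alpha> \<phi>" "low_values X d \<alpha> \<psi>"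
  shows "\<phi> = \<psi>"
  using assms by (intro Sec_eqI) (auto simp: low_values_def)

definition cochain_of_section :: "(nat \<Rightarrow> 'x set) \<Rightarrow> (nat \<Rightarrow> 'x \<Rightarrow> 'h list \<times> 'x) \<Rightarrow> 'x \<Rightarrow> 'h" where
  "cochain_of_section X \<phi> x = (if x \<in> X 1 then hd (fst (\<phi> 1 x)) else undefined)"

lemma Sec_degree_0: "\<phi> \<in> Sec X d s \<gamma> \<Longrightarrow> x \<in> X 0 \<Longrightarrow> \<phi> 0 x = ([], x)"
  by (metis Sec_simplex length_0_conv)

lemma Sec_degree_1: "\<phi> \<in> Sec X d s \<gamma> \<Longrightarrow> x \<in> X 1 \<Longrightarrow> \<phi> 1 x = ([cochain_of_section X \<phi> x], x)"
  by (erule Sec_simplex) (auto simp: cochain_of_section_def length_Suc_conv)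

context simplicial
begin

lemma Sec_degree_2:
  assumes \<phi>: "\<phi> \<in> Sec X d s \<gamma>" and x: "x \<in> X 2"
  obtains a b where "\<phi> 2 x = ([a, b], x)" "cochain_of_section X \<phi> (d 2 0 x) = b + \<gamma> x"
    "cochain_of_section X \<phi> (d 2 1 x) = a + b" "cochain_of_section X \<phi> (d 2 2 x) = a"
proof -
  obtain g where g: "\<phi> 2 x = (g, x)" "length g = 2"
    by (rule Sec_simplex[OF \<phi> x])
  then obtain a b where ab: "\<phi> 2 x = ([a, b], x)"
    by (auto simp: numeral_2_eq_2 length_Suc_conv)
  have "cochain_of_section X \<phi> (d 2 i x) = hd (fst (tw_face d \<gamma> 2 i ([a, b], x)))" if "i \<le> 2" for i
    using Sec_face[OF \<phi>, of x 1 i] face_closed[of i 1 x] that x ab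
    by (simp add: cochain_of_section_def numeral_2_eq_2)
  then show ?thesis
    by (intro that[OF ab]) (simp_all add: tw_face_def nerve_face_def numeral_2_eq_2)
qed

lemma cochain_of_section_in_No:
  assumes \<phi>: "\<phi> \<in> Sec X d s \<gamma>"
  shows "cochain_of_section X \<phi> \<in> No X d s \<gamma>"
proof -
  have "cochain_of_section X \<phi> (s 0 0 y) = 0" if y: "y \<in> X 0" for y
    using Sec_degen[OF \<phi> y, of 0] Sec_degree_0[OF \<phi> y] Sec_degree_1[OF \<phi>, of "s 0 0 y"]
      degen_closed[of 0 0 y] y
    by (simp add: tw_degen_def nerve_degen_def)
  moreover have "coboundary1 d (cochain_of_section X \<phi>) x = \<gamma> x" if "x \<in> X 2" for x
    by (rule Sec_degree_2[OF \<phi> that]) (simp add: coboundary1_def)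
  ultimately show ?thesis
    by (simp add: No_def normalized_1_cochain_def cochain_of_section_def)
qed

lemma low_values_cochain_of_section:
  assumes \<phi>: "\<phi> \<in> Sec X d s \<gamma>"
  shows "low_values X d (cochain_of_section X \<phi>) \<phi>"
proof -
  have "\<phi> 2 x = ([cochain_of_section X \<phi> (d 2 2 x),
      cochain_of_section X \<phi> (d 2 1 x) - cochain_of_section X \<phi> (d 2 2 x)], x)" if "x \<in> X 2" for x
    by (rule Sec_degree_2[OF \<phi> that]) simp
  then show ?thesis
    unfolding low_values_def using Sec_degree_0[OF \<phi>] Sec_degree_1[OF \<phi>] by blast
qed

end

lemma No_eq_if_low_values:
  assumes "\<alpha> \<in> No X d s \<gamma>" "\<beta> \<in> No X d s \<gamma>" "low_values X d \<alpha> \<phi>" "low_values X d \<beta> \<phi>"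
  shows "\<alpha> = \<beta>"
proof
  fix x
  show "\<alpha> x = \<beta> x"
    using assms by (cases "x \<in> X 1") (auto simp: low_values_def No_def normalized_1_cochain_def)
qed

theorem mainTheorem8:
  fixes X :: "nat \<Rightarrow> 'x set"
    and d :: "nat \<Rightarrow> nat \<Rightarrow> 'x \<Rightarrow> 'x"
    and s :: "nat \<Rightarrow> nat \<Rightarrow> 'x \<Rightarrow> 'x"
    and \<gamma> :: "'x \<Rightarrow> 'h::ab_group_add"
  assumes "simplicial_set X d s"
    and "normalized_2_cocycle X d s \<gamma>"
  shows "(\<forall>\<alpha>\<in>No X d s \<gamma>. \<exists>!\<phi>. \<phi> \<in> Sec X d s \<gamma> \<and> low_values X d \<alpha> \<phi>)
       \<and> bij_betw (\<lambda>\<alpha>. THE \<phi>. \<phi> \<in> Sec X d s \<gamma> \<and> low_values X d \<alpha> \<phi>)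
                  (No X d s \<gamma>) (Sec X d s \<gamma>)"
proof -
  interpret simplicial X d s
    using assms(1) by (rule simplicial_setD)
  have ex1: "\<exists>!\<phi>. \<phi> \<in> Sec X d s \<gamma> \<and> low_values X d \<alpha> \<phi>" if "\<alpha> \<in> No X d s \<gamma>" for \<alpha>
    using section_of_cochain_in_Sec[OF assms(2) that] low_values_section_of_cochain Sec_eq_if_low_values
    by (intro ex1I[of _ "section_of_cochain X d \<alpha>"]) blast+
  have "bij_betw (\<lambda>\<alpha>. THE \<phi>. \<phi> \<in> Sec X d s \<gamma> \<and> low_values X d \<alpha> \<phi>) (No X d s \<gamma>) (Sec X d s \<gamma>)"
  proof (rule bij_betw_THE)
    fix \<phi> assume "\<phi> \<in> Sec X d s \<gamma>"
    then show "\<exists>\<alpha>\<in>No X d s \<gamma>. low_values X d \<alpha> \<phi>"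
      using cochain_of_section_in_No low_values_cochain_of_section by blast
  qed (use ex1 No_eq_if_low_values in blast)+
  with ex1 show ?thesis by blast
qed

end
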